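(* Let $\mathbf{F}$ be a foliage tree and $X$ a topological space. (a) $\mathbf{F}$ grows into $X$ if and only if $\varnothing\notin\mathrm{Rise}_{\mathbf{F}}(X)$. (b) If $\mathbf{F}$ is a $\pi$-tree on $X$ and $p\in X$, then: (b1) the family $\{\mathrm{rise}_{\mathbf{F}}(p,U): U\text{ a neighbourhood of }p\text{ in }X\}$ has the finite intersection property; (b2) $\bigcap\{\mathrm{rise}_{\mathbf{F}}(p,U): U\text{ a neighbourhood of }p\text{ in }X\}=\varnothing$; (b3) $\mathrm{rise}_{\mathbf{F}}(p,U)$ is an infinite subset of $\omega$ for every neighbourhood $U$ of $p$ in $X$.
   Context: Neighbourhoods are not necessarily open. $\omega=\{0,1,2,\dots\}$, ${}^{<\omega}\omega$ is the set of finite sequences of natural numbers. A tree is a strict partial order in which the set of predecessors of every node is well-ordered; $\mathrm{height}(x)$ is the ordinal isomorphic to the set of predecessors of $x$; a branch is a maximal chain; $\mathrm{sons}(x)$ is the set of immediate successors of $x$; $0$ denotes the least node. A foliage tree is a pair $\mathbf{F}=(T,l)$ with $T$ a tree (skeleton) and $l$ a function on its nodes, $\mathbf{F}_x:=l(x)$; tree notions apply via the skeleton. $\mathrm{shoot}_{\mathbf{F}}(v)=\{\bigcup_{x\in C}\mathbf{F}_x: C\text{ a cofinite subset of }\mathrm{sons}_{\mathbf{F}}(v)\}$; $\mathrm{scope}_{\mathbf{F}}(p)=\{x:p\in\mathbf{F}_x\}$. For families $\gamma,\delta$ of sets, $\gamma\gg\delta$ means every nonempty $D\in\delta$ contains some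 nonempty $G\in\gamma$. $\mathrm{rise}_{\mathbf{F}}(p,U)=\{\mathrm{height}_{\mathbf{F}}(v): v\in\mathrm{scope}_{\mathbf{F}}(p)\text{ and }\mathrm{shoot}_{\mathbf{F}}(v)\gg\{U\}\}$; $\mathrm{Rise}_{\mathbf{F}}(X)=\{\mathrm{rise}_{\mathbf{F}}(p,U):p\in X,\ U\text{ a neighbourhood of }p\text{ in }X\}$. A family has the finite intersection property if every finite nonempty subfamily has nonempty intersection. $\mathbf{F}$ is locally strict if each non-maximal leaf $\mathbf{F}_x$ is the disjoint union of $\mathbf{F}_s$, $s\in\mathrm{sons}(x)$; has strict branches if it has a node and for each branch $B$, $\bigcap_{x\in B}\mathbf{F}_x$ is a singleton; is open in $X$ if all leaves are open in $X$; is a foliage $\omega,\omega$-tree if its skeleton is order-isomorphic to $({}^{<\omega}\omega,\subsetneq)$. A Baire foliage tree on $X$: open in $X$, locally strict foliage $\omega,\omega$-tree with strict branches and $\mathbf{F}_{0_{\mathbf{F}}}=X$. $\mathbf{F}$ grows into $X$ if for every $p\in X$ and neighbourhood $U$ of $p$ there is $z\in\mathrm{scope}_{\mathbf{F}}(p)$ with $\mathrm{shoot}_{\mathbf{F}}(z)\gg\{U\}$. A $\pi$-tree on $X$ is a Baire foliage tree on $X$ that grows into $X$. *)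

theory Defs
  imports "HOL-Analysis.Analysis" "HOL-Library.Sublist"
begin

text \<open>A foliage tree is given by a node set N, a strict order R (pairs (x,y) mean x < y)
  and a leaf function l.\<close>

definition preds :: "'n rel \<Rightarrow> 'n \<Rightarrow> 'n set" where
  "preds R x = {y. (y, x) \<in> R}"

definition is_tree :: "'n set \<Rightarrow> 'n rel \<Rightarrow> bool" where
  "is_tree N R \<longleftrightarrow> R \<subseteq> N \<times> N \<and> irrefl R \<and> trans R \<and>
     (\<forall>x\<in>N. (\<forall>a\<in>preds R x. \<forall>b\<in>preds R x. a = b \<or> (a, b) \<in> R \<or> (b, a) \<in> R) \<and>
              (\<forall>S. S \<subseteq> preds R x \<and> S \<noteq> {} \<longrightarrow> (\<exists>m\<in>S. \<forall>s\<in>S. s \<noteq> m \<longrightarrow> (m, s) \<in> R)))"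

definition foliage_tree :: "'n set \<Rightarrow> 'n rel \<Rightarrow> ('n \<Rightarrow> 'a set) \<Rightarrow> bool" where
  "foliage_tree N R l \<longleftrightarrow> is_tree N R"

text \<open>Height: the order type of the set of predecessors.  It is represented as the
  cardinality of the predecessor set (a natural number); this equals the ordinal height
  whenever it is finite.\<close>
definition height :: "'n rel \<Rightarrow> 'n \<Rightarrow> nat" where
  "height R x = card (preds R x)"

definition sons :: "'n set \<Rightarrow> 'n rel \<Rightarrow> 'n \<Rightarrow> 'n set" where
  "sons N R v = {s\<in>N. (v, s) \<in> R \<and> \<not> (\<exists>u. (v, u) \<in> R \<and> (u, s) \<in> R)}"

definition shoot :: "'n set \<Rightarrow> 'n rel \<Rightarrow> ('n \<Rightarrow> 'a set) \<Rightarrow> 'n \<Rightarrow> 'a set set" where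
  "shoot N R l v = {\<Union> (l ` C) | C. C \<subseteq> sons N R v \<and> finite (sons N R v - C)}"

definition scope :: "'n set \<Rightarrow> ('n \<Rightarrow> 'a set) \<Rightarrow> 'a \<Rightarrow> 'n set" where
  "scope N l p = {x\<in>N. p \<in> l x}"

definition refines :: "'a set set \<Rightarrow> 'a set set \<Rightarrow> bool" (infix "\<ggreater>" 50) where
  "\<gamma> \<ggreater> \<delta> \<longleftrightarrow> (\<forall>D\<in>\<delta>. D \<noteq> {} \<longrightarrow> (\<exists>G\<in>\<gamma>. G \<noteq> {} \<and> G \<subseteq> D))"

definition nbhd :: "'a topology \<Rightarrow> 'a \<Rightarrow> 'a set \<Rightarrow> bool" where
  "nbhd X p U \<longleftrightarrow> U \<subseteq> topspace X \<and> (\<exists>V. openin X V \<and> p \<in> V \<and> V \<subseteq> U)"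

definition rise :: "'n set \<Rightarrow> 'n rel \<Rightarrow> ('n \<Rightarrow> 'a set) \<Rightarrow> 'a \<Rightarrow> 'a set \<Rightarrow> nat set" where
  "rise N R l p U = {height R v | v. v \<in> scope N l p \<and> shoot N R l v \<ggreater> {U}}"

definition Rise :: "'n set \<Rightarrow> 'n rel \<Rightarrow> ('n \<Rightarrow> 'a set) \<Rightarrow> 'a topology \<Rightarrow> nat set set" where
  "Rise N R l X = {rise N R l p U | p U. p \<in> topspace X \<and> nbhd X p U}"

definition fip :: "'b set set \<Rightarrow> bool" where
  "fip \<F> \<longleftrightarrow> (\<forall>\<G>. \<G> \<subseteq> \<F> \<and> finite \<G> \<and> \<G> \<noteq> {} \<longrightarrow> \<Inter> \<G> \<noteq> {})"

definition locally_strict :: "'n set \<Rightarrow> 'n rel \<Rightarrow> ('n \<Rightarrow> 'a set) \<Rightarrow> bool" where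
  "locally_strict N R l \<longleftrightarrow>
     (\<forall>x\<in>N. (\<exists>y\<in>N. (x, y) \<in> R) \<longrightarrow>
        l x = \<Union> (l ` sons N R x) \<and> disjoint_family_on l (sons N R x))"

definition is_branch :: "'n set \<Rightarrow> 'n rel \<Rightarrow> 'n set \<Rightarrow> bool" where
  "is_branch N R B \<longleftrightarrow> B \<subseteq> N \<and> (\<forall>x\<in>B. \<forall>y\<in>B. x = y \<or> (x, y) \<in> R \<or> (y, x) \<in> R) \<and>
     (\<forall>C. C \<subseteq> N \<and> B \<subseteq> C \<and> (\<forall>x\<in>C. \<forall>y\<in>C. x = y \<or> (x, y) \<in> R \<or> (y, x) \<in> R) \<longrightarrow> C = B)"

definition strict_branches :: "'n set \<Rightarrow> 'n rel \<Rightarrow> ('n \<Rightarrow> 'a set) \<Rightarrow> bool" where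
  "strict_branches N R l \<longleftrightarrow> N \<noteq> {} \<and>
     (\<forall>B. is_branch N R B \<longrightarrow> (\<exists>q. (\<Inter>x\<in>B. l x) = {q}))"

definition open_in_space :: "'n set \<Rightarrow> ('n \<Rightarrow> 'a set) \<Rightarrow> 'a topology \<Rightarrow> bool" where
  "open_in_space N l X \<longleftrightarrow> (\<forall>x\<in>N. openin X (l x))"

definition omega_omega_tree :: "'n set \<Rightarrow> 'n rel \<Rightarrow> bool" where
  "omega_omega_tree N R \<longleftrightarrow> (\<exists>f. bij_betw f N (UNIV :: nat list set) \<and>
     (\<forall>x\<in>N. \<forall>y\<in>N. (x, y) \<in> R \<longleftrightarrow> strict_prefix (f x) (f y)))"

definition root :: "'n set \<Rightarrow> 'n rel \<Rightarrow> 'n" where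
  "root N R = (THE r. r \<in> N \<and> (\<forall>x\<in>N. x \<noteq> r \<longrightarrow> (r, x) \<in> R))"

definition baire_foliage_tree :: "'n set \<Rightarrow> 'n rel \<Rightarrow> ('n \<Rightarrow> 'a set) \<Rightarrow> 'a topology \<Rightarrow> bool" where
  "baire_foliage_tree N R l X \<longleftrightarrow> foliage_tree N R l \<and> open_in_space N l X \<and>
     locally_strict N R l \<and> omega_omega_tree N R \<and> strict_branches N R l \<and>
     l (root N R) = topspace X"

definition grows_into :: "'n set \<Rightarrow> 'n rel \<Rightarrow> ('n \<Rightarrow> 'a set) \<Rightarrow> 'a topology \<Rightarrow> bool" where
  "grows_into N R l X \<longleftrightarrow>
     (\<forall>p\<in>topspace X. \<forall>U. nbhd X p U \<longrightarrow> (\<exists>z\<in>scope N l p. shoot N R l z \<ggreater> {U}))"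

definition pi_tree :: "'n set \<Rightarrow> 'n rel \<Rightarrow> ('n \<Rightarrow> 'a set) \<Rightarrow> 'a topology \<Rightarrow> bool" where
  "pi_tree N R l X \<longleftrightarrow> baire_foliage_tree N R l X \<and> grows_into N R l X"

end

theory Submission imports Defs begin

text \<open>Part (a) is a reformulation: \<open>rise(p, U)\<close> is empty exactly when no node of the scope of \<open>p\<close>
  has a shoot refining \<open>{U}\<close>.  For (b1), \<open>rise(p, U)\<close> grows with \<open>U\<close> and finite
  intersections of neighbourhoods are neighbourhoods, so growing into \<open>X\<close> gives the finite
  intersection property.  For (b2), given \<open>n\<close> let \<open>w\<close> be the node of height \<open>n + 1\<close> whose leaf
  contains \<open>p\<close>; by local strictness its parent is the only node of height \<open>n\<close> in the scope of
  \<open>p\<close>, and every member of its shoot is a union of infinitely many pairwise disjoint leaves,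
  nonempty because branches are strict, so none fits inside the open neighbourhood \<open>F\<^sub>w\<close> of \<open>p\<close>.  Then (b3) holds
  because a family with the finite intersection property and empty intersection has no finite
  member.\<close>

locale omega_omega_skeleton =
  fixes N :: "'n set" and R :: "'n rel" and node :: "nat list \<Rightarrow> 'n"
  assumes bij_node: "bij_betw node UNIV N"
    and node_less_iff: "(node xs, node ys) \<in> R \<longleftrightarrow> strict_prefix xs ys"
    and R_subset: "R \<subseteq> N \<times> N"
begin

lemma node_in_N [simp]: "node xs \<in> N"
  using bij_node by (simp add: bij_betw_apply)

lemma node_eq_iff [simp]: "node xs = node ys \<longleftrightarrow> xs = ys"
  using bij_node by (simp add: bij_betw_def inj_eq)

lemma N_eq_range_node: "N = range node"
  using bij_node by (simp add: bij_betw_def)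

lemma obtain_node:
  assumes "x \<in> N"
  obtains xs where "x = node xs"
  using assms N_eq_range_node by blast

lemma sons_node: "sons N R (node xs) = range (\<lambda>i. node (xs @ [i]))"
proof (intro set_eqI iffI)
  fix s assume s: "s \<in> sons N R (node xs)"
  then obtain ys where ys: "s = node ys" by (auto simp: sons_def elim: obtain_node)
  with s have "strict_prefix xs ys" by (simp add: sons_def node_less_iff)
  then obtain i zs where ys_eq: "ys = xs @ i # zs"
    by (metis append_Nil2 neq_Nil_conv prefix_def strict_prefix_def)
  have "zs = []"
  proof (rule ccontr)
    assume "zs \<noteq> []"
    then have "strict_prefix xs (xs @ [i]) \<and> strict_prefix (xs @ [i]) ys"
      using ys_eq by (auto intro: strict_prefixI' simp: neq_Nil_conv)
    with s ys show False by (auto simp: sons_def simp flip: node_less_iff)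
  qed
  with ys ys_eq show "s \<in> range (\<lambda>i. node (xs @ [i]))" by blast
next
  fix s assume "s \<in> range (\<lambda>i. node (xs @ [i]))"
  then obtain i where s: "s = node (xs @ [i])" by blast
  have no_between: "\<not> (strict_prefix xs us \<and> strict_prefix us (xs @ [i]))" for us
    using prefix_length_less[of xs us] prefix_length_less[of us "xs @ [i]"] by auto
  have "\<not> ((node xs, u) \<in> R \<and> (u, s) \<in> R)" for u
  proof
    assume u: "(node xs, u) \<in> R \<and> (u, s) \<in> R"
    then obtain us where "u = node us" using R_subset by (blast elim: obtain_node)
    with u s no_between show False by (simp add: node_less_iff)
  qed
  then show "s \<in> sons N R (node xs)"
    using s by (auto simp: sons_def node_less_iff intro: strict_prefixI')
qed

lemma infinite_sons: "infinite (sons N R (node xs))"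
  unfolding sons_node by (rule range_inj_infinite) (simp add: inj_def)

lemma node_not_maximal: "\<exists>y\<in>N. (node xs, y) \<in> R"
  using node_in_N node_less_iff by (blast intro: strict_prefixI'[of "xs @ [0]" xs 0 "[]"])

lemma height_node: "height R (node xs) = length xs"
proof -
  have "preds R (node xs) = node ` {ys. strict_prefix ys xs}"
    using R_subset by (auto simp: preds_def node_less_iff elim!: obtain_node)
  also have "{ys. strict_prefix ys xs} = set (prefixes xs) - {xs}"
    by (auto simp: strict_prefix_def)
  finally have "height R (node xs) = card (set (prefixes xs) - {xs})"
    unfolding height_def by (simp add: card_image inj_on_def)
  then show ?thesis by simp
qed

lemma root_eq: "root N R = node []"
  unfolding root_def
proof (rule the_equality)
  show "node [] \<in> N \<and> (\<forall>x\<in>N. x \<noteq> node [] \<longrightarrow> (node [], x) \<in> R)"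
    by (auto simp: node_less_iff strict_prefix_def elim!: obtain_node)
next
  fix r assume "r \<in> N \<and> (\<forall>x\<in>N. x \<noteq> r \<longrightarrow> (r, x) \<in> R)"
  then show "r = node []"
    by (auto simp: node_less_iff elim!: obtain_node dest!: bspec[of _ _ "node []"])
qed

lemma is_branch_path: "is_branch N R (range (\<lambda>k. node (map s [0..<k])))"
proof -
  let ?B = "range (\<lambda>k. node (map s [0..<k]))"
  have prefix_path: "prefix (map s [0..<k]) (map s [0..<m])" if "k \<le> m" for k m
    using that take_is_prefix[of k "map s [0..<m]"] by (simp add: take_map)
  have chain: "\<forall>x\<in>?B. \<forall>y\<in>?B. x = y \<or> (x, y) \<in> R \<or> (y, x) \<in> R"
    using prefix_path by (auto simp: node_less_iff strict_prefix_def) (meson nat_le_linear)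
  have "C \<subseteq> ?B"
    if "C \<subseteq> N" "?B \<subseteq> C" "\<forall>x\<in>C. \<forall>y\<in>C. x = y \<or> (x, y) \<in> R \<or> (y, x) \<in> R" for C
  proof
    fix x assume "x \<in> C"
    with that(1) obtain ys where ys: "x = node ys" by (blast elim: obtain_node)
    let ?b = "node (map s [0..<length ys])"
    have "?b \<in> C" using that(2) by blast
    then have "ys = map s [0..<length ys] \<or> strict_prefix ys (map s [0..<length ys])
        \<or> strict_prefix (map s [0..<length ys]) ys"
      using that(3)[rule_format, OF \<open>x \<in> C\<close> \<open>?b \<in> C\<close>] ys by (simp add: node_less_iff)
    then have "ys = map s [0..<length ys]"
      using prefix_length_less by fastforce
    with ys show "x \<in> ?B" by (metis rangeI)
  qed
  with chain show ?thesis unfolding is_branch_def by auto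
qed

end

locale omega_omega_foliage = omega_omega_skeleton N R node
  for N :: "'n set" and R and node +
  fixes l :: "'n \<Rightarrow> 'a set"
  assumes locally_strict: "locally_strict N R l"
begin

lemma leaf_eq_Union_sons: "l (node xs) = (\<Union>i. l (node (xs @ [i])))"
  using locally_strict node_not_maximal[of xs]
  by (simp add: locally_strict_def sons_node image_comp)

lemma leaf_sons_disjoint:
  assumes "i \<noteq> j"
  shows "l (node (xs @ [i])) \<inter> l (node (xs @ [j])) = {}"
proof -
  have "disjoint_family_on l (sons N R (node xs))"
    using locally_strict node_not_maximal[of xs] by (simp add: locally_strict_def)
  then show ?thesis using assms by (auto simp: sons_node disjoint_family_on_def)
qed

lemma leaf_append_subset: "l (node (xs @ ys)) \<subseteq> l (node xs)"
proof (induction ys rule: rev_induct)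
  case (snoc y ys)
  then show ?case using leaf_eq_Union_sons[of "xs @ ys"] by auto
qed simp

lemma exists_leaf_at_level:
  assumes "p \<in> l (node [])"
  shows "\<exists>xs. length xs = n \<and> p \<in> l (node xs)"
proof (induction n)
  case (Suc n)
  then obtain xs where "length xs = n" "p \<in> l (node xs)" by blast
  moreover then obtain i where "p \<in> l (node (xs @ [i]))"
    using leaf_eq_Union_sons[of xs] by blast
  ultimately show ?case by (metis length_append_singleton)
qed (use assms in auto)

lemma leaf_at_level_unique:
  "length xs = length ys \<Longrightarrow> p \<in> l (node xs) \<Longrightarrow> p \<in> l (node ys) \<Longrightarrow> xs = ys"
proof (induction xs arbitrary: ys rule: rev_induct)
  case (snoc x xs)
  then obtain ys' y where ys: "ys = ys' @ [y]" by (metis length_0_conv rev_exhaust snoc_eq_iff_butlast)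
  have "xs = ys'"
    using snoc leaf_append_subset[of xs "[x]"] leaf_append_subset[of ys' "[y]"] ys by auto
  moreover have "x = y"
    using snoc.prems leaf_sons_disjoint[of x y xs] ys \<open>xs = ys'\<close> by blast
  ultimately show ?case using ys by simp
qed simp

lemma leaf_nonempty:
  assumes "strict_branches N R l"
  shows "l (node xs) \<noteq> {}"
proof -
  define s where "s k = (if k < length xs then xs ! k else 0)" for k
  have "xs = map s [0..<length xs]"
    by (rule nth_equalityI) (simp_all add: s_def)
  then have "node xs \<in> range (\<lambda>k. node (map s [0..<k]))" by (metis rangeI)
  moreover obtain q where "(\<Inter>x\<in>range (\<lambda>k. node (map s [0..<k])). l x) = {q}"
    using assms is_branch_path unfolding strict_branches_def by blast
  ultimately show ?thesis by blast
qed

text \<open>The sons of a node have nonempty, pairwise disjoint leaves, so no cofinite union of them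
  fits inside the leaf of a single son.\<close>
lemma not_shoot_refines_son_leaf:
  assumes "strict_branches N R l"
  shows "\<not> shoot N R l (node xs) \<ggreater> {l (node (xs @ [j]))}"
proof
  assume "shoot N R l (node xs) \<ggreater> {l (node (xs @ [j]))}"
  then obtain C where C: "C \<subseteq> sons N R (node xs)" "finite (sons N R (node xs) - C)"
    and C_sub: "\<Union> (l ` C) \<subseteq> l (node (xs @ [j]))"
    using leaf_nonempty[OF assms] by (auto simp: refines_def shoot_def)
  have "infinite C"
    using C infinite_sons[of xs] by (metis Diff_partition finite_Un)
  then have "C - {node (xs @ [j])} \<noteq> {}"
    using infinite_remove[of C] by (metis finite.emptyI)
  then obtain c where "c \<in> C" "c \<noteq> node (xs @ [j])" by blast
  moreover obtain i where "c = node (xs @ [i])" using \<open>c \<in> C\<close> C(1) by (auto simp: sons_node)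
  ultimately show False
    using C_sub leaf_sons_disjoint[of i j xs] leaf_nonempty[OF assms, of "xs @ [i]"] by auto
qed

lemma length_notin_rise_son_leaf:
  assumes "strict_branches N R l" and p: "p \<in> l (node (xs @ [j]))"
  shows "length xs \<notin> rise N R l p (l (node (xs @ [j])))"
proof
  assume "length xs \<in> rise N R l p (l (node (xs @ [j])))"
  then obtain ys where "length ys = length xs" "p \<in> l (node ys)"
    and refines: "shoot N R l (node ys) \<ggreater> {l (node (xs @ [j]))}"
    by (auto simp: rise_def scope_def height_node elim!: obtain_node)
  moreover have "p \<in> l (node xs)" using p leaf_append_subset by blast
  ultimately have "ys = xs" using leaf_at_level_unique by blast
  with refines not_shoot_refines_son_leaf[OF assms(1)] show False by blast
qed

end

lemma omega_omega_tree_enumeration: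
  assumes "omega_omega_tree N R" and "R \<subseteq> N \<times> N"
  obtains node where "omega_omega_skeleton N R node"
proof -
  obtain f where f: "bij_betw f N (UNIV :: nat list set)"
    and ord: "\<forall>x\<in>N. \<forall>y\<in>N. (x, y) \<in> R \<longleftrightarrow> strict_prefix (f x) (f y)"
    using assms(1) unfolding omega_omega_tree_def by blast
  have "bij_betw (inv_into N f) UNIV N" using f by (rule bij_betw_inv_into)
  moreover have "f (inv_into N f xs) = xs" for xs
    using f by (simp add: bij_betw_inv_into_right)
  ultimately have "omega_omega_skeleton N R (inv_into N f)"
    using ord assms(2) by unfold_locales (auto simp: bij_betw_apply)
  then show thesis by (rule that)
qed

lemma openin_imp_nbhd: "openin X U \<Longrightarrow> p \<in> U \<Longrightarrow> nbhd X p U"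
  unfolding nbhd_def using openin_subset by blast

lemma nbhd_mem: "nbhd X p U \<Longrightarrow> p \<in> U"
  unfolding nbhd_def by blast

lemma nbhd_Int: "nbhd X p U \<Longrightarrow> nbhd X p V \<Longrightarrow> nbhd X p (U \<inter> V)"
proof -
  assume "nbhd X p U" "nbhd X p V"
  then obtain U' V' where "openin X U'" "p \<in> U'" "U' \<subseteq> U" "openin X V'" "p \<in> V'" "V' \<subseteq> V"
    unfolding nbhd_def by blast
  with \<open>nbhd X p U\<close> show ?thesis
    unfolding nbhd_def by (intro conjI exI[of _ "U' \<inter> V'"]) auto
qed

lemma nbhd_Inter: "finite \<U> \<Longrightarrow> \<U> \<noteq> {} \<Longrightarrow> \<forall>U\<in>\<U>. nbhd X p U \<Longrightarrow> nbhd X p (\<Inter>\<U>)"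
  by (induction \<U> rule: finite_ne_induct) (auto intro: nbhd_Int)

lemma refines_singleton_mono: "\<gamma> \<ggreater> {U} \<Longrightarrow> U \<subseteq> V \<Longrightarrow> U \<noteq> {} \<Longrightarrow> \<gamma> \<ggreater> {V}"
  unfolding refines_def by (simp, meson subset_trans)

lemma rise_mono: "U \<subseteq> V \<Longrightarrow> U \<noteq> {} \<Longrightarrow> rise N R l p U \<subseteq> rise N R l p V"
  unfolding rise_def by (blast intro: refines_singleton_mono)

lemma rise_nonempty_iff: "rise N R l p U \<noteq> {} \<longleftrightarrow> (\<exists>z\<in>scope N l p. shoot N R l z \<ggreater> {U})"
  unfolding rise_def by blast

lemma grows_into_iff_empty_notin_Rise: "grows_into N R l X \<longleftrightarrow> {} \<notin> Rise N R l X"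
proof -
  have "grows_into N R l X \<longleftrightarrow> (\<forall>p\<in>topspace X. \<forall>U. nbhd X p U \<longrightarrow> rise N R l p U \<noteq> {})"
    by (simp add: grows_into_def rise_nonempty_iff)
  also have "\<dots> \<longleftrightarrow> {} \<notin> Rise N R l X"
    unfolding Rise_def by blast
  finally show ?thesis .
qed

lemma fip_rise:
  assumes "grows_into N R l X" and "p \<in> topspace X"
  shows "fip {rise N R l p U | U. nbhd X p U}"
  unfolding fip_def
proof (intro allI impI)
  fix \<G> assume \<G>: "\<G> \<subseteq> {rise N R l p U | U. nbhd X p U} \<and> finite \<G> \<and> \<G> \<noteq> {}"
  then have "\<forall>r\<in>\<G>. \<exists>U. nbhd X p U \<and> r = rise N R l p U" by blast
  then obtain nb where nb: "\<forall>r\<in>\<G>. nbhd X p (nb r) \<and> r = rise N R l p (nb r)"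
    by (rule bchoice[elim_format]) blast
  define W where "W = \<Inter> (nb ` \<G>)"
  have W: "nbhd X p W" unfolding W_def using \<G> nb by (intro nbhd_Inter) auto
  have "rise N R l p W \<subseteq> r" if "r \<in> \<G>" for r
  proof -
    have "W \<subseteq> nb r" unfolding W_def using that by blast
    moreover have "W \<noteq> {}" using nbhd_mem[OF W] by auto
    ultimately have "rise N R l p W \<subseteq> rise N R l p (nb r)" by (rule rise_mono)
    moreover have "r = rise N R l p (nb r)" using nb that by blast
    ultimately show ?thesis by simp
  qed
  moreover obtain n where "n \<in> rise N R l p W"
    using assms W unfolding grows_into_def rise_nonempty_iff[symmetric] by blast
  ultimately show "\<Inter>\<G> \<noteq> {}" by blast
qed

text \<open>A point of the leaf of a node of height \<open>n + 1\<close> is a neighbourhood witnessing that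
  \<open>n\<close> is not a rise level.\<close>
lemma baire_foliage_tree_rise_avoids:
  assumes "baire_foliage_tree N R l X" and "p \<in> topspace X"
  shows "\<exists>U. nbhd X p U \<and> n \<notin> rise N R l p U"
proof -
  have R_subset: "R \<subseteq> N \<times> N" and omega: "omega_omega_tree N R"
    using assms(1) by (simp_all add: baire_foliage_tree_def foliage_tree_def is_tree_def)
  obtain node where "omega_omega_skeleton N R node"
    using omega_omega_tree_enumeration[OF omega R_subset] .
  then interpret omega_omega_foliage N R node l
    using assms(1) by (simp add: omega_omega_foliage_def omega_omega_foliage_axioms_def
        baire_foliage_tree_def)
  have top: "l (node []) = topspace X"
    using assms(1) by (simp add: baire_foliage_tree_def root_eq)
  obtain w where "length w = Suc n" "p \<in> l (node w)"
    using exists_leaf_at_level assms(2) top by blast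
  then obtain xs j where w: "w = xs @ [j]" "length xs = n"
    by (metis length_Suc_conv_rev)
  have "openin X (l (node w))"
    using assms(1) by (simp add: baire_foliage_tree_def open_in_space_def)
  then have "nbhd X p (l (node w))" using \<open>p \<in> l (node w)\<close> by (rule openin_imp_nbhd)
  moreover have "n \<notin> rise N R l p (l (node w))"
    using length_notin_rise_son_leaf assms(1) \<open>p \<in> l (node w)\<close> w
    by (auto simp: baire_foliage_tree_def)
  ultimately show ?thesis by blast
qed

lemma fip_Inter_empty_imp_infinite:
  assumes "fip \<F>" and "\<Inter>\<F> = {}" and "A \<in> \<F>"
  shows "infinite A"
proof
  assume "finite A"
  have "\<forall>n\<in>A. \<exists>B\<in>\<F>. n \<notin> B" using assms(2) by blast
  then obtain B where B: "\<forall>n\<in>A. B n \<in> \<F> \<and> n \<notin> B n" by metis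
  have "\<Inter> (insert A (B ` A)) = {}" using B by blast
  moreover have "insert A (B ` A) \<subseteq> \<F>" using B assms(3) by blast
  ultimately show False using assms(1) \<open>finite A\<close> unfolding fip_def by blast
qed

theorem lemma8:
  fixes N :: "'n set" and R :: "'n rel" and l :: "'n \<Rightarrow> 'a set" and X :: "'a topology"
  assumes "foliage_tree N R l"
  shows "(grows_into N R l X \<longleftrightarrow> {} \<notin> Rise N R l X) \<and>
         (\<forall>p. pi_tree N R l X \<and> p \<in> topspace X \<longrightarrow>
           fip {rise N R l p U | U. nbhd X p U} \<and>
           \<Inter> {rise N R l p U | U. nbhd X p U} = {} \<and>
           (\<forall>U. nbhd X p U \<longrightarrow> infinite (rise N R l p U)))"
proof (intro conjI allI impI)
  show "grows_into N R l X \<longleftrightarrow> {} \<notin> Rise N R l X"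
    by (rule grows_into_iff_empty_notin_Rise)
  fix p assume "pi_tree N R l X \<and> p \<in> topspace X"
  then have grows: "grows_into N R l X" and baire: "baire_foliage_tree N R l X"
    and p: "p \<in> topspace X"
    by (simp_all add: pi_tree_def)
  show fip: "fip {rise N R l p U | U. nbhd X p U}"
    using grows p by (rule fip_rise)
  show Inter: "\<Inter> {rise N R l p U | U. nbhd X p U} = {}"
  proof (rule equals0I)
    fix n assume n: "n \<in> \<Inter> {rise N R l p U | U. nbhd X p U}"
    obtain U where "nbhd X p U" "n \<notin> rise N R l p U"
      using baire_foliage_tree_rise_avoids[OF baire p] by blast
    moreover from \<open>nbhd X p U\<close> have "rise N R l p U \<in> {rise N R l p U | U. nbhd X p U}" by blast
    ultimately show False using n by blast
  qed
  fix U assume "nbhd X p U"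
  then have "rise N R l p U \<in> {rise N R l p U | U. nbhd X p U}" by blast
  then show "infinite (rise N R l p U)"
    by (rule fip_Inter_empty_imp_infinite[OF fip Inter])
qed

end
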